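(* (a) Let $n\ge2$ and $m$ be integers with $\gcd(m,n)=1$, and let $\lambda=re^{\pi i m/n}$ with $r\in[2^{-1/n},1)$. Then $A_\lambda$ is a $2n$-gon all of whose angles equal $\pi(n-1)/n$; in particular $A_\lambda$ has non-empty interior. (b) Let $n\ge1$ and $m$ be integers with $\gcd(m,2n+1)=1$, and let $\lambda=re^{2\pi i m/(2n+1)}$ with $r\in[2^{-1/(2n+1)},1)$. Then $A_\lambda$ is a $(4n+2)$-gon all of whose angles equal $2n\pi/(2n+1)$; in particular $A_\lambda$ has non-empty interior.
   Context: $A_\lambda=\{\sum_{n\ge0}a_n\lambda^n:a_n\in\{-1,1\}\}$ for $|\lambda|<1$, the attractor of the iterated function system $\{\lambda z-1,\lambda z+1\}$. *)

theory Defs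
  imports "HOL-Analysis.Analysis"
begin

definition attractor :: "complex \<Rightarrow> complex set" where
  "attractor lam = {z. \<exists>a::nat \<Rightarrow> complex. (\<forall>k. a k \<in> {-1, 1}) \<and> z = (\<Sum>k. a k * lam ^ k)}"

definition vertex_angle :: "complex \<Rightarrow> complex \<Rightarrow> complex \<Rightarrow> real" where
  "vertex_angle q p s = arccos (((q - p) \<bullet> (s - p)) / (norm (q - p) * norm (s - p)))"

text \<open>A is a (convex) k-gon with vertices v 0, ..., v (k-1) listed counterclockwise
  (v is k-periodic), every vertex strictly convex, and all interior angles equal theta.\<close>
definition polygon_all_angles :: "complex set \<Rightarrow> nat \<Rightarrow> real \<Rightarrow> bool" where
  "polygon_all_angles A k \<theta> \<longleftrightarrow> k \<ge> 3 \<and>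
     (\<exists>v::nat \<Rightarrow> complex.
        (\<forall>j. v (j + k) = v j) \<and>
        (\<forall>i j. i mod k \<noteq> j mod k \<and> i mod k \<noteq> (Suc j) mod k \<longrightarrow>
               Im ((v i - v j) * cnj (v (Suc j) - v j)) > 0) \<and>
        A = convex hull (v ` {..<k}) \<and>
        (\<forall>j<k. vertex_angle (v (j + k - 1)) (v j) (v (Suc j)) = \<theta>))"

end

theory Submission
  imports Defs
begin

(* Grouping the digits of a sum in A_lambda by their index mod N shows that A_lambda consists of
   the sums of x_i lambda^i (i < N) with every x_i in A_(lambda^N). For lambda = r cis (pi M / N)
   the number lambda^N = +-r^N is real, and since r^N >= 1/2 the greedy expansion shows that
   A_(lambda^N) is the whole interval [-R, R], R = 1 / (1 - r^N). As M is coprime to N,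
   lambda^i = +-r^i w^(M i mod N) with w = cis (pi / N) meets every direction w^p, p < N, exactly
   once, so A_lambda is the zonotope sum_p [-1, 1] c_p w^p with all c_p > 0. Its boundary consists
   of the edges 2 c_p w^p followed by their negatives, in angular order and each turning by pi / N:
   a convex 2N-gon with all angles pi (N - 1) / N. Part (b) is the case N = 2n + 1, M = 2m. *)


lemma sin_pi_mult_nonneg: "0 \<le> x \<Longrightarrow> x \<le> 1 \<Longrightarrow> 0 \<le> sin (pi * x)"
  by (intro sin_ge_zero) (simp_all add: mult_left_le)

lemma sin_pi_mult_neg: "1 < x \<Longrightarrow> x < 2 \<Longrightarrow> sin (pi * x) < 0"
  by (intro sin_lt_zero) simp_all

lemma sin_pi_frac_sign:
  assumes "0 \<le> x\<^sub>0" "x\<^sub>0 < real N" "p < N"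
  shows "(if real p < x\<^sub>0 then 1 else -1) * sin (pi * (real p - x\<^sub>0) / real N)
    = - \<bar>sin (pi * (real p - x\<^sub>0) / real N)\<bar>"
proof (cases "real p < x\<^sub>0")
  case True
  then have "0 \<le> (x\<^sub>0 - real p) / real N" "(x\<^sub>0 - real p) / real N \<le> 1"
    using assms by (auto simp: field_simps)
  then have "0 \<le> sin (pi * (x\<^sub>0 - real p) / real N)"
    using sin_pi_mult_nonneg[of "(x\<^sub>0 - real p) / real N"] by simp
  moreover have "sin (pi * (real p - x\<^sub>0) / real N) = - sin (pi * (x\<^sub>0 - real p) / real N)"
    by (metis minus_diff_eq mult_minus_right minus_divide_left sin_minus)
  ultimately show ?thesis using True by simp
next
  case False
  then have "0 \<le> (real p - x\<^sub>0) / real N" "(real p - x\<^sub>0) / real N \<le> 1"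
    using assms by (auto simp: field_simps)
  then have "0 \<le> sin (pi * (real p - x\<^sub>0) / real N)"
    using sin_pi_mult_nonneg[of "(real p - x\<^sub>0) / real N"] by simp
  then show ?thesis using False by simp
qed

lemma abs_sum_le_if_abs_coeffs_le_one:
  fixes t c s :: "'a \<Rightarrow> real"
  assumes "\<And>p. p \<in> A \<Longrightarrow> \<bar>t p\<bar> \<le> 1" "\<And>p. p \<in> A \<Longrightarrow> 0 \<le> c p"
  shows "\<bar>\<Sum>p\<in>A. t p * c p * s p\<bar> \<le> (\<Sum>p\<in>A. c p * \<bar>s p\<bar>)"
proof -
  have "\<bar>\<Sum>p\<in>A. t p * c p * s p\<bar> \<le> (\<Sum>p\<in>A. \<bar>t p * c p * s p\<bar>)"
    by (rule sum_abs)
  also have "\<dots> \<le> (\<Sum>p\<in>A. c p * \<bar>s p\<bar>)"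
  proof (rule sum_mono)
    fix p assume "p \<in> A"
    then have "\<bar>t p\<bar> * (c p * \<bar>s p\<bar>) \<le> 1 * (c p * \<bar>s p\<bar>)"
      using assms by (intro mult_right_mono) auto
    then show "\<bar>t p * c p * s p\<bar> \<le> c p * \<bar>s p\<bar>"
      using assms(2)[OF \<open>p \<in> A\<close>] by (simp add: abs_mult mult.assoc)
  qed
  finally show ?thesis .
qed

lemma inner_cis: "a \<bullet> cis \<theta> = cmod a * cos (\<theta> - Arg a)"
proof -
  have "Re a = cmod a * cos (Arg a)" "Im a = cmod a * sin (Arg a)"
    by (metis Re_rcis Im_rcis rcis_cmod_Arg)+
  then show ?thesis by (simp add: inner_complex_def cos_diff algebra_simps)
qed

lemma inner_cis_pi_frac_eq_sin:
  assumes "0 < N"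
  obtains \<sigma> x\<^sub>0 where "0 \<le> x\<^sub>0" "x\<^sub>0 < real N"
    "\<And>p. a \<bullet> cis (pi * real p / real N) = \<sigma> * sin (pi * (real p - x\<^sub>0) / real N)"
proof -
  define y where "y = real N * Arg a / pi - real N / 2"
  define q where "q = \<lfloor>y / real N\<rfloor>"
  define x\<^sub>0 where "x\<^sub>0 = y - real N * of_int q"
  have "of_int q \<le> y / real N" "y / real N < of_int q + 1"
    unfolding q_def by linarith+
  then have "0 \<le> x\<^sub>0" "x\<^sub>0 < real N"
    using assms by (auto simp: x\<^sub>0_def field_simps)
  moreover have "a \<bullet> cis (pi * real p / real N)
      = (cmod a * cos (pi * of_int q)) * sin (pi * (real p - x\<^sub>0) / real N)" for p
  proof -
    have "pi * real p / real N - Arg a = pi * (real p - x\<^sub>0) / real N - pi * of_int q - pi / 2"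
      using assms by (simp add: x\<^sub>0_def y_def field_simps)
    then show ?thesis
      by (simp add: inner_cis cos_diff sin_diff)
  qed
  ultimately show ?thesis using that by blast
qed

lemma cis_pi_int_frac:
  assumes "0 < N"
  shows "cis (pi * of_int k / real N)
    = of_real (cos (pi * of_int (k div int N))) * cis (pi * real (nat (k mod int N)) / real N)"
proof -
  have "k = int N * (k div int N) + k mod int N" by simp
  then have "real_of_int k = real N * of_int (k div int N) + of_int (k mod int N)"
    by (metis of_int_add of_int_mult of_int_of_nat_eq)
  then have "pi * of_int k / real N = pi * of_int (k div int N) + pi * of_int (k mod int N) / real N"
    using assms by (simp add: field_simps)
  moreover have "cis (pi * of_int (k div int N)) = of_real (cos (pi * of_int (k div int N)))"
    by (simp add: cis.ctr complex_of_real_def)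
  moreover have "real (nat (k mod int N)) = of_int (k mod int N)"
    using assms by simp
  ultimately show ?thesis by (simp add: cis_mult[symmetric])
qed

lemma power_rcis_pi_int_frac:
  assumes "0 < N"
  shows "(of_real r * cis (pi * of_int M / real N)) ^ i
    = of_real (cos (pi * of_int (M * int i div int N)))
        * (of_real (r ^ i) * cis (pi * real (nat ((M * int i) mod int N)) / real N))"
proof -
  have "(of_real r * cis (pi * of_int M / real N)) ^ i
      = of_real (r ^ i) * cis (pi * of_int (M * int i) / real N)"
    by (simp add: power_mult_distrib Complex.DeMoivre field_simps)
  then show ?thesis
    unfolding cis_pi_int_frac[OF assms] by (simp add: ac_simps)
qed

lemma bij_betw_mult_mod:
  assumes "0 < N" "coprime M (int N)"
  shows "bij_betw (\<lambda>i. nat ((M * int i) mod int N)) {..<N} {..<N}"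
proof -
  let ?\<pi> = "\<lambda>i. nat ((M * int i) mod int N)"
  have "inj_on ?\<pi> {..<N}"
  proof (rule inj_onI)
    fix i j assume "i \<in> {..<N}" "j \<in> {..<N}" "?\<pi> i = ?\<pi> j"
    then have "(M * int i) mod int N = (M * int j) mod int N"
      using assms(1) by (simp add: nat_eq_iff2)
    then have "int N dvd M * (int i - int j)"
      by (simp add: mod_eq_dvd_iff right_diff_distrib)
    then have "int N dvd int i - int j"
      using assms(2) by (simp add: coprime_commute coprime_dvd_mult_right_iff)
    then show "i = j"
      using \<open>i \<in> {..<N}\<close> \<open>j \<in> {..<N}\<close> by (simp add: mod_eq_dvd_iff[symmetric])
  qed
  moreover have "?\<pi> ` {..<N} \<subseteq> {..<N}"
    using assms(1) by (auto simp: nat_less_iff)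
  ultimately show ?thesis
    by (simp add: bij_betw_def endo_inj_surj)
qed

lemma half_le_power_if_root_le:
  assumes "0 < N" "2 powr (- 1 / real N) \<le> r"
  shows "0 < r" "1 / 2 \<le> r ^ N"
proof -
  show "0 < r" using assms(2) powr_gt_zero[of 2 "- 1 / real N"] by linarith
  have "(2 powr (- 1 / real N)) ^ N = 2 powr (- 1 / real N * real N)"
    by (simp add: powr_realpow[symmetric] powr_powr)
  also have "\<dots> = 1 / 2" using assms(1) by (simp add: powr_minus_divide)
  finally show "1 / 2 \<le> r ^ N"
    using assms(2) by (metis power_mono powr_ge_zero)
qed

lemma convex_hull_eq_if_supporting_points:
  fixes S :: "'a::euclidean_space set"
  assumes "convex S" "finite V" "V \<subseteq> S" and support: "\<And>a. \<exists>v\<in>V. \<forall>z\<in>S. a \<bullet> v \<le> a \<bullet> z"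
  shows "S = convex hull V"
proof
  show "convex hull V \<subseteq> S" using assms(3,1) by (rule hull_minimal)
  show "S \<subseteq> convex hull V"
  proof
    fix z assume z: "z \<in> S"
    show "z \<in> convex hull V"
    proof (rule ccontr)
      assume "z \<notin> convex hull V"
      moreover have "closed (convex hull V)"
        using assms(2) by (intro compact_imp_closed finite_imp_compact_convex_hull)
      ultimately obtain a b where ab: "a \<bullet> z < b" "\<forall>x \<in> convex hull V. b < a \<bullet> x"
        using separating_hyperplane_closed_point[OF convex_convex_hull] by blast
      obtain v where v: "v \<in> V" "\<forall>z\<in>S. a \<bullet> v \<le> a \<bullet> z" using support by blast
      have "b < a \<bullet> v" using ab(2) hull_inc[OF v(1)] by blast
      moreover have "a \<bullet> v \<le> a \<bullet> z" using v(2) z by blast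
      ultimately show False using ab(1) by simp
    qed
  qed
qed

section \<open>Zonotopes in the plane\<close>

definition zonotope :: "(nat \<Rightarrow> complex) \<Rightarrow> nat \<Rightarrow> complex set" where
  "zonotope g N = {\<Sum>p<N. of_real (t p) * g p | t. \<forall>p<N. \<bar>t p\<bar> \<le> 1}"

lemma zonotope_iff:
  "z \<in> zonotope g N \<longleftrightarrow> (\<exists>t. (\<forall>p<N. \<bar>t p\<bar> \<le> 1) \<and> z = (\<Sum>p<N. of_real (t p) * g p))"
  by (auto simp: zonotope_def)

lemma zonotope_cong: "(\<And>p. p < N \<Longrightarrow> g p = h p) \<Longrightarrow> zonotope g N = zonotope h N"
  unfolding zonotope_def by (metis (no_types, lifting) lessThan_iff sum.cong)

lemma convex_zonotope: "convex (zonotope g N)"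
proof (rule convexI)
  fix x y and u v :: real
  assume "x \<in> zonotope g N" "y \<in> zonotope g N" and uv: "0 \<le> u" "0 \<le> v" "u + v = 1"
  then obtain s t where s: "\<forall>p<N. \<bar>s p\<bar> \<le> 1" "x = (\<Sum>p<N. of_real (s p) * g p)"
    and t: "\<forall>p<N. \<bar>t p\<bar> \<le> 1" "y = (\<Sum>p<N. of_real (t p) * g p)"
    by (auto simp: zonotope_iff)
  have "\<bar>u * s p + v * t p\<bar> \<le> 1" if "p < N" for p
  proof -
    have "\<bar>u * s p + v * t p\<bar> \<le> u * \<bar>s p\<bar> + v * \<bar>t p\<bar>"
      using uv by (simp add: abs_mult order_trans[OF abs_triangle_ineq])
    also have "\<dots> \<le> u * 1 + v * 1"
      using uv s t that by (intro add_mono mult_left_mono) auto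
    finally show ?thesis using uv by simp
  qed
  moreover have "u *\<^sub>R x + v *\<^sub>R y = (\<Sum>p<N. of_real (u * s p + v * t p) * g p)"
    unfolding s(2) t(2) scaleR_conv_of_real sum_distrib_left sum.distrib[symmetric]
    by (intro sum.cong refl) (simp add: distrib_right)
  ultimately show "u *\<^sub>R x + v *\<^sub>R y \<in> zonotope g N"
    unfolding zonotope_iff by (intro exI[of _ "\<lambda>p. u * s p + v * t p"]) blast
qed

lemma zonotope_uminus: "z \<in> zonotope g N \<Longrightarrow> - z \<in> zonotope g N"
proof -
  assume "z \<in> zonotope g N"
  then obtain t where "\<forall>p<N. \<bar>t p\<bar> \<le> 1" "z = (\<Sum>p<N. of_real (t p) * g p)"
    by (auto simp: zonotope_iff)
  then show ?thesis
    unfolding zonotope_iff by (intro exI[of _ "\<lambda>p. - t p"]) (simp add: sum_negf[symmetric])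
qed

lemma zonotope_reindex:
  assumes "bij_betw \<pi> {..<N} {..<N}"
  shows "zonotope (g \<circ> \<pi>) N = zonotope g N"
proof -
  have sum_reindex: "(\<Sum>i<N. of_real (t (\<pi> i)) * g (\<pi> i)) = (\<Sum>p<N. of_real (t p) * g p)" for t
    using sum.reindex_bij_betw[OF assms, of "\<lambda>p. of_real (t p) * g p"] .
  have inv: "\<pi> (inv_into {..<N} \<pi> p) = p" "inv_into {..<N} \<pi> p < N" if "p < N" for p
    using assms that inv_into_into[of p \<pi> "{..<N}"] by (auto simp: bij_betw_def f_inv_into_f)
  show ?thesis
  proof (intro equalityI subsetI)
    fix z assume "z \<in> zonotope (g \<circ> \<pi>) N"
    then obtain t where t: "\<forall>i<N. \<bar>t i\<bar> \<le> 1" "z = (\<Sum>i<N. of_real (t i) * g (\<pi> i))"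
      by (auto simp: zonotope_iff)
    define s where "s = t \<circ> inv_into {..<N} \<pi>"
    have "z = (\<Sum>i<N. of_real (s (\<pi> i)) * g (\<pi> i))"
      unfolding t(2) s_def using assms by (intro sum.cong) (auto simp: bij_betw_def)
    moreover have "\<forall>p<N. \<bar>s p\<bar> \<le> 1" using t(1) inv by (simp add: s_def)
    ultimately show "z \<in> zonotope g N" unfolding sum_reindex zonotope_iff by (intro exI[of _ s]) blast
  next
    fix z assume "z \<in> zonotope g N"
    then obtain s where s: "\<forall>p<N. \<bar>s p\<bar> \<le> 1" "z = (\<Sum>p<N. of_real (s p) * g p)"
      by (auto simp: zonotope_iff)
    have "\<forall>i<N. \<bar>s (\<pi> i)\<bar> \<le> 1" using s(1) assms by (auto simp: bij_betw_def)
    then show "z \<in> zonotope (g \<circ> \<pi>) N"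
      unfolding zonotope_iff s(2) sum_reindex[symmetric] by auto
  qed
qed

lemma zonotope_flip_signs:
  assumes "\<forall>p<N. \<bar>\<epsilon> p\<bar> = 1"
  shows "zonotope (\<lambda>p. of_real (\<epsilon> p) * g p) N = zonotope g N"
proof -
  have flipped_sum: "(\<Sum>p<N. of_real (t p * \<epsilon> p) * (of_real (\<epsilon> p) * g p)) = (\<Sum>p<N. of_real (t p) * g p)"
    for t
  proof (intro sum.cong refl)
    fix p assume "p \<in> {..<N}"
    then have "\<epsilon> p * \<epsilon> p = 1" using assms by (auto simp: abs_if split: if_splits)
    then show "of_real (t p * \<epsilon> p) * (of_real (\<epsilon> p) * g p) = of_real (t p) * g p"
      by (simp add: mult.assoc flip: of_real_mult)
  qed
  have bound: "\<forall>p<N. \<bar>t p * \<epsilon> p\<bar> \<le> 1" if "\<forall>p<N. \<bar>t p\<bar> \<le> 1" for t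
    using assms that by (simp add: abs_mult)
  show ?thesis
  proof (intro equalityI subsetI)
    fix z assume "z \<in> zonotope (\<lambda>p. of_real (\<epsilon> p) * g p) N"
    then obtain t where t: "\<forall>p<N. \<bar>t p\<bar> \<le> 1" "z = (\<Sum>p<N. of_real (t p) * (of_real (\<epsilon> p) * g p))"
      by (auto simp: zonotope_iff)
    have "z = (\<Sum>p<N. of_real (t p * \<epsilon> p) * g p)"
      unfolding t(2) by (intro sum.cong refl) (simp only: of_real_mult mult.assoc)
    then show "z \<in> zonotope g N"
      using bound[OF t(1)] unfolding zonotope_iff by (intro exI[of _ "\<lambda>p. t p * \<epsilon> p"]) blast
  next
    fix z assume "z \<in> zonotope g N"
    then obtain t where t: "\<forall>p<N. \<bar>t p\<bar> \<le> 1" "z = (\<Sum>p<N. of_real (t p) * g p)"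
      by (auto simp: zonotope_iff)
    then show "z \<in> zonotope (\<lambda>p. of_real (\<epsilon> p) * g p) N"
      using bound[OF t(1)] unfolding zonotope_iff flipped_sum[symmetric]
      by (intro exI[of _ "\<lambda>p. t p * \<epsilon> p"]) blast
  qed
qed

lemma interior_zonotope_nonempty:
  assumes "2 \<le> N" and independent: "Im (g 1 * cnj (g 0)) \<noteq> 0"
  shows "interior (zonotope g N) \<noteq> {}"
proof -
  define f where "f z = of_real (Re z) * g 0 + of_real (Im z) * g 1" for z
  have "linear f"
    by (rule linearI) (simp_all add: f_def algebra_simps scaleR_conv_of_real)
  moreover have "inj f"
    unfolding linear_inj_iff_eq_0[OF \<open>linear f\<close>]
  proof (intro allI impI)
    fix z assume "f z = 0"
    moreover have "Im (f z * cnj (g 0)) = Im z * Im (g 1 * cnj (g 0))"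
      by (simp add: f_def algebra_simps)
    ultimately have "Im z = 0" using independent by simp
    with \<open>f z = 0\<close> have "Re z * g 0 = 0" by (simp add: f_def)
    moreover have "g 0 \<noteq> 0" using independent by auto
    ultimately show "z = 0" using \<open>Im z = 0\<close> by (auto simp: complex_eq_iff)
  qed
  moreover have "f ` ball 0 1 \<subseteq> zonotope g N"
  proof
    fix w assume "w \<in> f ` ball 0 1"
    then obtain z where z: "norm z < 1" "w = f z" by auto
    define t where "t p = (if p = 0 then Re z else if p = 1 then Im z else 0)" for p :: nat
    have "\<forall>p<N. \<bar>t p\<bar> \<le> 1"
      using z(1) abs_Re_le_cmod[of z] abs_Im_le_cmod[of z] by (simp add: t_def)
    moreover have "(\<Sum>p<N. of_real (t p) * g p) = (\<Sum>p<2. of_real (t p) * g p)"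
      using assms(1) by (intro sum.mono_neutral_right) (auto simp: t_def)
    then have "w = (\<Sum>p<N. of_real (t p) * g p)"
      by (simp add: z(2) f_def t_def numeral_2_eq_2)
    ultimately show "w \<in> zonotope g N" unfolding zonotope_iff by (intro exI[of _ t]) blast
  qed
  ultimately have "f ` ball 0 1 \<subseteq> interior (zonotope g N)"
    using interior_injective_linear_image[of f "ball 0 1"] interior_mono[of "f ` ball 0 1"]
    by (simp add: interior_open)
  then have "f 0 \<in> interior (zonotope g N)" by auto
  then show ?thesis by auto
qed

section \<open>The regular zonogon\<close>

(* Starting from - sum gen and adding the doubled generators in angular order traces the boundary
   of the zonogon: after N edges one arrives at + sum gen, and since cis pi = -1 the next N edges
   are the first N negated. *)
locale regular_zonogon =
  fixes N :: nat and c :: "nat \<Rightarrow> real"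
  assumes two_le_N: "2 \<le> N" and c_pos: "\<And>p. p < N \<Longrightarrow> 0 < c p"
begin

definition gen :: "nat \<Rightarrow> complex" where
  "gen p = of_real (c p) * cis (pi * real p / real N)"

definition edge :: "nat \<Rightarrow> complex" where
  "edge j = 2 * of_real (c (j mod N)) * cis (pi * real j / real N)"

definition vertex :: "nat \<Rightarrow> complex" where
  "vertex j = - (\<Sum>p<N. gen p) + (\<Sum>u<j. edge u)"

lemma N_pos: "0 < N"
  using two_le_N by simp

lemma c_mod_pos: "0 < c (j mod N)"
  using c_pos N_pos by simp

lemma sin_pi_div_N_pos: "0 < sin (pi / real N)"
proof -
  have "pi / real N < pi * 1" using two_le_N by (intro divide_less_eq[THEN iffD2]) auto
  then show ?thesis using N_pos by (intro sin_gt_zero) auto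
qed

lemma edge_add_N: "edge (j + N) = - edge j"
proof -
  have "pi * real (j + N) / real N = pi * real j / real N + pi"
    using N_pos by (simp add: field_simps)
  then have "cis (pi * real (j + N) / real N) = cis (pi * real j / real N) * cis pi"
    by (simp only: cis_mult)
  then show ?thesis by (simp add: edge_def)
qed

lemma vertex_Suc: "vertex (Suc j) = vertex j + edge j"
  by (simp add: vertex_def)

lemma vertex_N: "vertex N = - vertex 0"
proof -
  have "(\<Sum>u<N. edge u) = 2 * (\<Sum>p<N. gen p)"
    by (simp add: edge_def gen_def sum_distrib_left mult.assoc)
  then show ?thesis by (simp add: vertex_def)
qed

lemma vertex_add_N: "vertex (j + N) = - vertex j"
  by (induction j) (simp_all add: vertex_N vertex_Suc edge_add_N)

lemma vertex_add_2N: "vertex (j + 2 * N) = vertex j"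
  using vertex_add_N[of j] vertex_add_N[of "j + N"] by (simp add: mult_2 add.assoc)

lemma vertex_mod: "vertex (j mod (2 * N)) = vertex j"
proof -
  have "vertex (k + 2 * N * q) = vertex k" for k q
  proof (induction q)
    case (Suc q)
    have "vertex (k + 2 * N * Suc q) = vertex ((k + 2 * N * q) + 2 * N)"
      by (simp add: algebra_simps)
    then show ?case using vertex_add_2N Suc.IH by simp
  qed simp
  from this[of "j mod (2 * N)" "j div (2 * N)"] show ?thesis by simp
qed

lemma vertex_diff: "s \<le> s' \<Longrightarrow> vertex s' - vertex s = (\<Sum>u\<in>{s..<s'}. edge u)"
  by (simp add: vertex_def atLeast0LessThan[symmetric] sum_diff_nat_ivl)

lemma edge_mult_cnj:
  "edge u * cnj (edge b) = of_real (4 * c (u mod N) * c (b mod N)) * cis (pi * (real u - real b) / real N)"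
  by (simp add: edge_def cis_cnj cis_mult diff_divide_distrib right_diff_distrib)

lemma Im_vertex_diff_mult_cnj_edge:
  "s \<le> s' \<Longrightarrow> Im ((vertex s' - vertex s) * cnj (edge b))
     = (\<Sum>u\<in>{s..<s'}. 4 * c (u mod N) * c (b mod N) * sin (pi * (real u - real b) / real N))"
  by (simp add: vertex_diff sum_distrib_right Im_sum edge_mult_cnj)

lemma vertex_left_of_edge:
  assumes "2 \<le> s" "s < 2 * N"
  shows "0 < Im ((vertex (b + s) - vertex b) * cnj (edge b))"
proof -
  let ?f = "\<lambda>u. 4 * c (u mod N) * c (b mod N) * sin (pi * (real u - real b) / real N)"
  show ?thesis
  proof (cases "s \<le> N + 1")
    case True
    have "0 < sum ?f {b..<b + s}"
    proof (rule sum_pos2)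
      show "b + 1 \<in> {b..<b + s}" using assms by simp
      show "0 < ?f (b + 1)" using c_mod_pos sin_pi_div_N_pos by simp
      fix u assume "u \<in> {b..<b + s}"
      then have "0 \<le> (real u - real b) / real N" "(real u - real b) / real N \<le> 1"
        using True N_pos by (auto simp: divide_le_eq_1)
      then have "0 \<le> sin (pi * (real u - real b) / real N)"
        using sin_pi_mult_nonneg[of "(real u - real b) / real N"] by simp
      then show "0 \<le> ?f u" using c_mod_pos[of u] c_mod_pos[of b] by simp
    qed simp
    then show ?thesis by (subst Im_vertex_diff_mult_cnj_edge) auto
  next
    case False
    have "0 < (\<Sum>u\<in>{b + s..<b + 2 * N}. - ?f u)"
    proof (rule sum_pos)
      fix u assume "u \<in> {b + s..<b + 2 * N}"
      then have "1 < (real u - real b) / real N" "(real u - real b) / real N < 2"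
        using False N_pos by (auto simp: field_simps)
      then have "sin (pi * (real u - real b) / real N) < 0"
        using sin_pi_mult_neg[of "(real u - real b) / real N"] by simp
      then show "0 < - ?f u" using c_mod_pos[of u] c_mod_pos[of b] by (simp add: mult_pos_neg)
    qed (use assms in auto)
    also have "\<dots> = - Im ((vertex (b + 2 * N) - vertex (b + s)) * cnj (edge b))"
      using assms by (subst Im_vertex_diff_mult_cnj_edge) (auto simp: sum_negf)
    also have "\<dots> = Im ((vertex (b + s) - vertex b) * cnj (edge b))"
      unfolding vertex_add_2N by (simp add: algebra_simps)
    finally show ?thesis .
  qed
qed

lemma vertex_left_turn:
  assumes "i mod (2 * N) \<noteq> j mod (2 * N)" "i mod (2 * N) \<noteq> Suc j mod (2 * N)"
  shows "0 < Im ((vertex i - vertex j) * cnj (vertex (Suc j) - vertex j))"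
proof -
  define s where "s = (i + (2 * N - 1) * j) mod (2 * N)"
  have "(j + s) mod (2 * N) = (j + (i + (2 * N - 1) * j)) mod (2 * N)"
    by (simp add: s_def mod_add_right_eq)
  also have "j + (i + (2 * N - 1) * j) = i + 2 * N * j"
    using N_pos by (simp add: diff_mult_distrib le_add2 trans_le_add2)
  finally have s: "(j + s) mod (2 * N) = i mod (2 * N)" by simp
  then have "vertex i = vertex (j + s)" by (metis vertex_mod)
  moreover have "s \<noteq> 0" using s assms(1) by (metis add_0_right)
  moreover have "s \<noteq> 1" using s assms(2) by (metis One_nat_def add_Suc_right add_0_right)
  moreover have "s < 2 * N" using N_pos by (simp add: s_def)
  ultimately show ?thesis using vertex_left_of_edge[of s j] by (simp add: vertex_Suc)
qed

lemma vertex_angle_eq: "vertex_angle (vertex (j + 2 * N - 1)) (vertex j) (vertex (Suc j)) = pi - pi / real N"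
proof -
  define k where "k = j + 2 * N - 1"
  have "Suc k = j + 2 * N" using N_pos by (simp add: k_def)
  then have in_edge: "vertex k - vertex j = - edge k"
    using vertex_Suc[of k] vertex_add_2N[of j] by simp
  have out_edge: "vertex (Suc j) - vertex j = edge j" by (simp add: vertex_Suc)
  have "cos (pi * (real k - real j) / real N) = cos (2 * pi - pi / real N)"
    using N_pos by (simp add: k_def of_nat_diff field_simps)
  then have "Re (edge k * cnj (edge j)) = 4 * c (k mod N) * c (j mod N) * cos (pi / real N)"
    by (simp add: edge_mult_cnj)
  moreover have "(- edge k) \<bullet> edge j = - Re (edge k * cnj (edge j))"
    by (simp add: inner_complex_def)
  ultimately have "(- edge k) \<bullet> edge j = - (4 * c (k mod N) * c (j mod N) * cos (pi / real N))"
    by simp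
  moreover have "norm (- edge k) * norm (edge j) = (2 * c (k mod N)) * (2 * c (j mod N))"
    using c_mod_pos[of k] c_mod_pos[of j] by (simp add: edge_def norm_mult)
  ultimately have cos_angle:
    "(- edge k) \<bullet> edge j / (norm (- edge k) * norm (edge j)) = cos (pi - pi / real N)"
    using c_mod_pos[of k] c_mod_pos[of j] by simp
  have "arccos (cos (pi - pi / real N)) = pi - pi / real N"
    using two_le_N by (intro arccos_cos) (auto simp: field_simps)
  then show ?thesis
    unfolding vertex_angle_def k_def[symmetric] in_edge out_edge cos_angle .
qed

lemma vertex_eq_sign_sum:
  assumes "j \<le> N"
  shows "vertex j = (\<Sum>p<N. of_real (if p < j then 1 else -1) * gen p)"
proof -
  have "(\<Sum>u<j. edge u) = (\<Sum>u<j. 2 * gen u)"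
    using assms by (intro sum.cong) (auto simp: edge_def gen_def)
  also have "\<dots> = (\<Sum>p<N. if p < j then 2 * gen p else 0)"
  proof -
    have "{..<N} \<inter> {..<j} = {..<j}" using assms by auto
    then show ?thesis using sum.inter_restrict[of "{..<N}" "\<lambda>p. 2 * gen p" "{..<j}"] by simp
  qed
  finally have "vertex j = (\<Sum>p<N. - gen p + (if p < j then 2 * gen p else 0))"
    by (simp add: vertex_def sum_subtractf)
  also have "\<dots> = (\<Sum>p<N. of_real (if p < j then 1 else -1) * gen p)"
    by (intro sum.cong) auto
  finally show ?thesis .
qed

lemma vertex_in_zonotope: "vertex j \<in> zonotope gen N"
proof -
  have "vertex k \<in> zonotope gen N" if "k \<le> N" for k
    unfolding vertex_eq_sign_sum[OF that] zonotope_iff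
    by (intro exI[of _ "\<lambda>p. if p < k then 1 else -1"]) simp
  moreover have "j mod (2 * N) < 2 * N" using N_pos by simp
  ultimately have "vertex (j mod (2 * N)) \<in> zonotope gen N"
    using vertex_add_N[of "j mod (2 * N) - N"] zonotope_uminus
    by (cases "j mod (2 * N) \<le> N") (auto simp: le_add_diff_inverse2)
  then show ?thesis by (simp add: vertex_mod)
qed

lemma inner_zonotope_sum:
  "a \<bullet> (\<Sum>p<N. of_real (t p) * gen p) = (\<Sum>p<N. t p * c p * (a \<bullet> cis (pi * real p / real N)))"
  by (simp add: gen_def inner_sum_right ac_simps flip: scaleR_conv_of_real)

(* p \<mapsto> a \<bullet> cis (pi p / N) is a sinusoid changing sign once on [0, N), so the sign
   pattern minimising a \<bullet> z over the zonogon is that of a vertex. *)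
lemma zonotope_min_at_vertex: "\<exists>k. \<forall>z\<in>zonotope gen N. a \<bullet> vertex k \<le> a \<bullet> z"
proof -
  obtain \<sigma> x\<^sub>0 where x\<^sub>0: "0 \<le> x\<^sub>0" "x\<^sub>0 < real N"
    and a_cis: "\<And>p. a \<bullet> cis (pi * real p / real N) = \<sigma> * sin (pi * (real p - x\<^sub>0) / real N)"
    by (rule inner_cis_pi_frac_eq_sin[OF N_pos, of a]) (rule that)
  define sn where "sn p = sin (pi * (real p - x\<^sub>0) / real N)" for p
  define S where "S = (\<Sum>p<N. c p * \<bar>sn p\<bar>)"
  have inner_sum: "a \<bullet> (\<Sum>p<N. of_real (t p) * gen p) = \<sigma> * (\<Sum>p<N. t p * c p * sn p)" for t
    by (simp add: inner_zonotope_sum a_cis sn_def sum_distrib_left ac_simps)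
  define j where "j = nat \<lceil>x\<^sub>0\<rceil>"
  have "j \<le> N" using x\<^sub>0 by (simp add: j_def nat_le_iff ceiling_le_iff)
  have "p < j \<longleftrightarrow> real p < x\<^sub>0" for p
    by (simp add: j_def zless_nat_eq_int_zless less_ceiling_iff)
  then have "a \<bullet> vertex j = \<sigma> * (\<Sum>p<N. c p * ((if real p < x\<^sub>0 then 1 else -1) * sn p))"
    unfolding vertex_eq_sign_sum[OF \<open>j \<le> N\<close>] inner_sum by (simp add: ac_simps)
  also have "\<dots> = - \<sigma> * S"
    using x\<^sub>0 by (simp add: sn_def sin_pi_frac_sign S_def sum_negf)
  finally have vertex_value: "a \<bullet> vertex (if 0 \<le> \<sigma> then j else j + N) = - \<bar>\<sigma>\<bar> * S"
    by (simp add: vertex_add_N)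
  have "- \<bar>\<sigma>\<bar> * S \<le> a \<bullet> z" if "z \<in> zonotope gen N" for z
  proof -
    obtain t where t: "\<forall>p<N. \<bar>t p\<bar> \<le> 1" "z = (\<Sum>p<N. of_real (t p) * gen p)"
      using \<open>z \<in> zonotope gen N\<close> by (auto simp: zonotope_iff)
    then have "\<bar>\<Sum>p<N. t p * c p * sn p\<bar> \<le> S"
      unfolding S_def using c_pos by (intro abs_sum_le_if_abs_coeffs_le_one) (auto intro: less_imp_le)
    then have "\<bar>\<sigma>\<bar> * \<bar>\<Sum>p<N. t p * c p * sn p\<bar> \<le> \<bar>\<sigma>\<bar> * S"
      by (rule mult_left_mono) simp
    then show ?thesis
      unfolding t(2) inner_sum using abs_ge_minus_self[of "\<sigma> * (\<Sum>p<N. t p * c p * sn p)"]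
      by (simp add: abs_mult)
  qed
  then show ?thesis using vertex_value by metis
qed

lemma zonotope_eq_convex_hull_vertices: "zonotope gen N = convex hull (vertex ` {..<2 * N})"
proof (rule convex_hull_eq_if_supporting_points)
  show "vertex ` {..<2 * N} \<subseteq> zonotope gen N" using vertex_in_zonotope by blast
  fix a
  obtain k where "\<forall>z\<in>zonotope gen N. a \<bullet> vertex k \<le> a \<bullet> z"
    using zonotope_min_at_vertex by blast
  moreover have "vertex k \<in> vertex ` {..<2 * N}"
    using N_pos by (intro image_eqI[where x = "k mod (2 * N)"]) (simp_all add: vertex_mod)
  ultimately show "\<exists>v\<in>vertex ` {..<2 * N}. \<forall>z\<in>zonotope gen N. a \<bullet> v \<le> a \<bullet> z" by blast
qed (simp_all add: convex_zonotope)

lemma interior_nonempty: "interior (zonotope gen N) \<noteq> {}"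
proof (rule interior_zonotope_nonempty[OF two_le_N])
  show "Im (gen 1 * cnj (gen 0)) \<noteq> 0"
    using c_pos[of 0] c_pos[of 1] two_le_N sin_pi_div_N_pos by (simp add: gen_def)
qed

lemma polygon_all_angles_zonotope: "polygon_all_angles (zonotope gen N) (2 * N) (pi * (real N - 1) / real N)"
  unfolding polygon_all_angles_def
proof (intro conjI exI[of _ vertex])
  show "3 \<le> 2 * N" using two_le_N by simp
  show "\<forall>j. vertex (j + 2 * N) = vertex j" by (simp add: vertex_add_2N)
  show "\<forall>i j. i mod (2 * N) \<noteq> j mod (2 * N) \<and> i mod (2 * N) \<noteq> Suc j mod (2 * N) \<longrightarrow>
      0 < Im ((vertex i - vertex j) * cnj (vertex (Suc j) - vertex j))"
    using vertex_left_turn by blast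
  show "zonotope gen N = convex hull vertex ` {..<2 * N}"
    by (rule zonotope_eq_convex_hull_vertices)
  have "pi - pi / real N = pi * (real N - 1) / real N" using N_pos by (simp add: field_simps)
  then show "\<forall>j<2 * N. vertex_angle (vertex (j + 2 * N - 1)) (vertex j) (vertex (Suc j))
      = pi * (real N - 1) / real N"
    using vertex_angle_eq by simp
qed

end

section \<open>The attractor as a zonotope\<close>

lemma suminf_residue_classes:
  fixes f :: "nat \<Rightarrow> 'a::banach"
  assumes "0 < N" "0 \<le> r" "r < 1" and bound: "\<And>k. norm (f k) \<le> r ^ k"
  shows "suminf f = (\<Sum>i<N. \<Sum>j. f (j * N + i))"
proof -
  have "summable f"
    by (rule summable_comparison_test[OF _ summable_geometric[of r]]) (use assms in auto)
  then have "(\<lambda>j. sum f {j * N..<j * N + N}) sums suminf f"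
    using sums_group[OF summable_sums \<open>0 < N\<close>] by blast
  moreover have "sum f {j * N..<j * N + N} = (\<Sum>i<N. f (j * N + i))" for j
    using sum.shift_bounds_nat_ivl[of f 0 "j * N" N] by (simp add: atLeast0LessThan add.commute)
  ultimately have "(\<lambda>j. \<Sum>i<N. f (j * N + i)) sums suminf f" by simp
  moreover have "(\<lambda>j. \<Sum>i<N. f (j * N + i)) sums (\<Sum>i<N. \<Sum>j. f (j * N + i))"
  proof (intro sums_sum summable_sums)
    fix i
    have "norm (f (j * N + i)) \<le> (r ^ N) ^ j" for j
    proof -
      have "norm (f (j * N + i)) \<le> r ^ (j * N + i)" by (rule bound)
      also have "\<dots> \<le> r ^ (j * N)" using assms by (intro power_decreasing) auto
      finally have "norm (f (j * N + i)) \<le> r ^ (j * N)" .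
      then show ?thesis by (simp add: power_mult mult.commute)
    qed
    moreover have "r ^ N < 1" using assms by (simp add: power_less_one_iff)
    ultimately show "summable (\<lambda>j. f (j * N + i))"
      using assms by (intro summable_comparison_test[OF _ summable_geometric[of "r ^ N"]]) auto
  qed
  ultimately show ?thesis by (rule sums_unique2)
qed

lemma suminf_regroup_powers:
  fixes a :: "nat \<Rightarrow> complex"
  assumes "0 < N" "norm lam < 1" and bounded: "\<And>k. norm (a k) \<le> 1"
  shows "(\<Sum>k. a k * lam ^ k) = (\<Sum>i<N. (\<Sum>j. a (j * N + i) * (lam ^ N) ^ j) * lam ^ i)"
proof -
  have "norm (a k * lam ^ k) \<le> norm lam ^ k" for k
    using bounded[of k] by (simp add: norm_mult norm_power mult_left_le_one_le)
  then have "(\<Sum>k. a k * lam ^ k) = (\<Sum>i<N. \<Sum>j. a (j * N + i) * lam ^ (j * N + i))"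
    using assms by (intro suminf_residue_classes) auto
  moreover have summable: "summable (\<lambda>j. a (j * N + i) * (lam ^ N) ^ j)" for i
  proof (rule summable_comparison_test[OF _ summable_geometric[of "norm lam ^ N"]])
    show "\<exists>M. \<forall>j\<ge>M. norm (a (j * N + i) * (lam ^ N) ^ j) \<le> (norm lam ^ N) ^ j"
      using bounded by (simp add: norm_mult norm_power mult_left_le_one_le)
    show "norm (norm lam ^ N) < 1" using assms by (simp add: power_less_one_iff)
  qed
  moreover have "(\<Sum>j. a (j * N + i) * lam ^ (j * N + i)) = (\<Sum>j. a (j * N + i) * (lam ^ N) ^ j) * lam ^ i"
    for i
    unfolding suminf_mult2[OF summable]
    by (simp add: power_add power_mult mult.commute[of _ N] mult.assoc)
  ultimately show ?thesis by simp
qed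

lemma attractor_eq_power_decomposition:
  assumes "0 < N" "norm lam < 1"
  shows "attractor lam = {\<Sum>i<N. w i * lam ^ i | w. \<forall>i<N. w i \<in> attractor (lam ^ N)}"
proof -
  have regroup: "(\<Sum>k. a k * lam ^ k) = (\<Sum>i<N. (\<Sum>j. a (j * N + i) * (lam ^ N) ^ j) * lam ^ i)"
    if "\<forall>k. a k \<in> {-1, 1}" for a
  proof (rule suminf_regroup_powers[OF assms])
    show "norm (a k) \<le> 1" for k using that[rule_format, of k] by auto
  qed
  show ?thesis
  proof (intro equalityI subsetI)
    fix z assume "z \<in> attractor lam"
    then obtain a where a: "\<forall>k. a k \<in> {-1, 1}" "z = (\<Sum>k. a k * lam ^ k)"
      by (auto simp: attractor_def)
    have "(\<Sum>j. a (j * N + i) * (lam ^ N) ^ j) \<in> attractor (lam ^ N)" for i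
      unfolding attractor_def mem_Collect_eq using a(1)
      by (intro exI[of _ "\<lambda>j. a (j * N + i)"]) simp
    then show "z \<in> {\<Sum>i<N. w i * lam ^ i | w. \<forall>i<N. w i \<in> attractor (lam ^ N)}"
      unfolding a(2) regroup[OF a(1)] mem_Collect_eq
      by (intro exI[of _ "\<lambda>i. \<Sum>j. a (j * N + i) * (lam ^ N) ^ j"]) simp
  next
    fix z assume "z \<in> {\<Sum>i<N. w i * lam ^ i | w. \<forall>i<N. w i \<in> attractor (lam ^ N)}"
    then obtain w where w: "\<forall>i<N. w i \<in> attractor (lam ^ N)" "z = (\<Sum>i<N. w i * lam ^ i)"
      by blast
    then have "\<forall>i\<in>{..<N}. \<exists>d. (\<forall>j. d j \<in> {-1, 1}) \<and> w i = (\<Sum>j. d j * (lam ^ N) ^ j)"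
      by (simp add: attractor_def)
    from bchoice[OF this] obtain b
      where b: "\<forall>i\<in>{..<N}. (\<forall>j. b i j \<in> {-1, 1}) \<and> w i = (\<Sum>j. b i j * (lam ^ N) ^ j)"
      by (elim exE)
    define a where "a k = b (k mod N) (k div N)" for k
    have a: "\<forall>k. a k \<in> {-1, 1}"
      using b assms by (simp add: a_def)
    have "z = (\<Sum>i<N. (\<Sum>j. a (j * N + i) * (lam ^ N) ^ j) * lam ^ i)"
      unfolding w(2) using b assms by (intro sum.cong) (auto simp: a_def)
    then show "z \<in> attractor lam"
      unfolding regroup[OF a, symmetric] attractor_def mem_Collect_eq using a by (intro exI[of _ a]) simp
  qed
qed

lemma greedy_step_bound:
  fixes \<rho> y :: real
  assumes "1 / 2 \<le> \<rho>" "\<rho> < 1" "\<bar>y\<bar> \<le> 1 / (1 - \<rho>)"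
  shows "\<bar>(y - (if 0 \<le> y then 1 else -1)) / \<rho>\<bar> \<le> 1 / (1 - \<rho>)"
proof -
  have \<rho>: "0 < \<rho>" "0 < 1 - \<rho>" using assms by auto
  have "1 \<le> \<rho> / (1 - \<rho>)" "1 / (1 - \<rho>) - 1 = \<rho> / (1 - \<rho>)"
    using assms \<rho> by (simp_all add: field_simps)
  then have "\<bar>y - (if 0 \<le> y then 1 else -1)\<bar> \<le> \<rho> / (1 - \<rho>)"
    using assms(3) by (auto simp: abs_le_iff)
  then show ?thesis using \<rho> by (simp add: abs_divide divide_le_eq mult.commute)
qed

lemma exists_signed_expansion:
  fixes \<rho> x :: real
  assumes "1 / 2 \<le> \<rho>" "\<rho> < 1" "\<bar>x\<bar> \<le> 1 / (1 - \<rho>)"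
  obtains b where "\<forall>j. b j \<in> {-1, 1}" "(\<lambda>j. b j * \<rho> ^ j) sums x"
proof -
  define digit :: "real \<Rightarrow> real" where "digit y = (if 0 \<le> y then 1 else -1)" for y
  define rem where "rem j = ((\<lambda>y. (y - digit y) / \<rho>) ^^ j) x" for j
  have \<rho>: "0 < \<rho>" "0 < 1 - \<rho>" using assms by auto
  have rem_Suc: "rem (Suc j) = (rem j - digit (rem j)) / \<rho>" for j
    by (simp add: rem_def)
  have rem_bound: "\<bar>rem j\<bar> \<le> 1 / (1 - \<rho>)" for j
    by (induction j) (use assms greedy_step_bound in \<open>simp_all add: rem_def digit_def\<close>)
  have partial_sum: "(\<Sum>i<j. digit (rem i) * \<rho> ^ i) = x - \<rho> ^ j * rem j" for j
  proof (induction j)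
    case 0 then show ?case by (simp add: rem_def)
  next
    case (Suc j)
    have "\<rho> ^ Suc j * rem (Suc j) = \<rho> ^ j * (rem j - digit (rem j))"
      using \<rho> by (simp add: rem_Suc)
    then show ?case using Suc.IH by (simp add: algebra_simps)
  qed
  have "(\<lambda>j. \<rho> ^ j * rem j) \<longlonglongrightarrow> 0"
  proof (rule Lim_null_comparison)
    show "\<forall>\<^sub>F j in sequentially. norm (\<rho> ^ j * rem j) \<le> \<rho> ^ j * (1 / (1 - \<rho>))"
    proof (intro always_eventually allI)
      fix j
      have "\<rho> ^ j * \<bar>rem j\<bar> \<le> \<rho> ^ j * (1 / (1 - \<rho>))"
        using rem_bound \<rho> by (intro mult_left_mono) auto
      then show "norm (\<rho> ^ j * rem j) \<le> \<rho> ^ j * (1 / (1 - \<rho>))"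
        using \<rho> by (simp add: abs_mult)
    qed
    show "(\<lambda>j. \<rho> ^ j * (1 / (1 - \<rho>))) \<longlonglongrightarrow> 0"
      using assms \<rho> by (intro tendsto_mult_left_zero LIMSEQ_power_zero) auto
  qed
  then have "(\<lambda>j. \<Sum>i<j. digit (rem i) * \<rho> ^ i) \<longlonglongrightarrow> x"
    unfolding partial_sum using tendsto_diff[OF tendsto_const, of _ 0 sequentially x] by simp
  then show ?thesis
    using that[of "\<lambda>j. digit (rem j)"] by (simp add: sums_def digit_def)
qed

lemma attractor_of_real_subset:
  fixes \<mu> :: real
  assumes "\<bar>\<mu>\<bar> < 1"
  shows "attractor (of_real \<mu>) \<subseteq> of_real ` {- 1 / (1 - \<bar>\<mu>\<bar>) .. 1 / (1 - \<bar>\<mu>\<bar>)}"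
proof
  fix z assume "z \<in> attractor (of_real \<mu>)"
  then obtain a where a: "\<forall>k. a k \<in> {-1, 1}" "z = (\<Sum>k. a k * of_real \<mu> ^ k)"
    by (auto simp: attractor_def)
  have norm_term: "norm (a k * of_real \<mu> ^ k) = \<bar>\<mu>\<bar> ^ k" for k
    using a(1)[rule_format, of k] by (auto simp: norm_mult norm_power)
  have "summable (\<lambda>k. a k * of_real \<mu> ^ k)"
    by (rule summable_norm_cancel) (simp add: norm_term assms)
  moreover have "Im (a k) = 0" for k
    using a(1)[rule_format, of k] by auto
  ultimately have "Im z = 0"
    unfolding a(2) by (simp add: Im_suminf)
  moreover have "norm z \<le> (\<Sum>k. \<bar>\<mu>\<bar> ^ k)"
    unfolding a(2) by (rule norm_suminf_le) (simp_all add: norm_term assms)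
  ultimately show "z \<in> of_real ` {- 1 / (1 - \<bar>\<mu>\<bar>) .. 1 / (1 - \<bar>\<mu>\<bar>)}"
    using abs_Re_le_cmod[of z] assms
    by (intro image_eqI[where x = "Re z"]) (auto simp: complex_eq_iff suminf_geometric)
qed

lemma of_real_mem_attractor:
  fixes \<mu> x :: real
  assumes "1 / 2 \<le> \<bar>\<mu>\<bar>" "\<bar>\<mu>\<bar> < 1" "\<bar>x\<bar> \<le> 1 / (1 - \<bar>\<mu>\<bar>)"
  shows "of_real x \<in> attractor (of_real \<mu>)"
proof -
  obtain b where b: "\<forall>j. b j \<in> {-1, 1}" "(\<lambda>j. b j * \<bar>\<mu>\<bar> ^ j) sums x"
    using exists_signed_expansion[OF assms] by blast
  define \<sigma> :: real where "\<sigma> = (if 0 \<le> \<mu> then 1 else -1)"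
  define d where "d k = b k * \<sigma> ^ k" for k
  have abs_d: "\<bar>d k\<bar> = 1" for k
    using b(1)[rule_format, of k] by (auto simp: d_def \<sigma>_def abs_mult power_abs)
  have d_pm: "of_real (d k) \<in> {-1, 1::complex}" for k
    using abs_d[of k] by (cases "0 \<le> d k") auto
  have term_eq: "of_real (d k) * of_real \<mu> ^ k = (of_real (b k * \<bar>\<mu>\<bar> ^ k) :: complex)" for k
  proof -
    have "\<sigma> * \<mu> = \<bar>\<mu>\<bar>" by (simp add: \<sigma>_def)
    then have "\<sigma> ^ k * \<mu> ^ k = \<bar>\<mu>\<bar> ^ k" by (metis power_mult_distrib)
    then show ?thesis by (simp add: d_def mult.assoc flip: of_real_mult of_real_power)
  qed
  have "(\<lambda>k. of_real (d k) * of_real \<mu> ^ k) sums (of_real x :: complex)"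
    unfolding term_eq by (rule sums_of_real[OF b(2)])
  then show ?thesis
    unfolding attractor_def mem_Collect_eq using d_pm
    by (intro exI[of _ "\<lambda>k. of_real (d k)"]) (auto simp: sums_iff)
qed

lemma attractor_of_real:
  fixes \<mu> :: real
  assumes "1 / 2 \<le> \<bar>\<mu>\<bar>" "\<bar>\<mu>\<bar> < 1"
  shows "attractor (of_real \<mu>) = of_real ` {- 1 / (1 - \<bar>\<mu>\<bar>) .. 1 / (1 - \<bar>\<mu>\<bar>)}"
  using attractor_of_real_subset[OF assms(2)] of_real_mem_attractor[OF assms]
  by (fastforce simp: abs_le_iff)

lemma attractor_eq_zonotope:
  assumes "0 < N" and lam_N: "lam ^ N = of_real \<mu>" and "1 / 2 \<le> \<bar>\<mu>\<bar>" "\<bar>\<mu>\<bar> < 1"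
  shows "attractor lam = zonotope (\<lambda>i. of_real (1 / (1 - \<bar>\<mu>\<bar>)) * lam ^ i) N"
proof -
  define R where "R = 1 / (1 - \<bar>\<mu>\<bar>)"
  have "0 < R" using assms by (simp add: R_def)
  have "norm lam ^ N < 1" using lam_N assms by (simp flip: norm_power)
  then have "norm lam < 1" using \<open>0 < N\<close> by (simp add: power_less_one_iff)
  then have attractor_lam:
    "attractor lam = {\<Sum>i<N. w i * lam ^ i | w. \<forall>i<N. w i \<in> of_real ` {- R .. R}}"
    unfolding attractor_eq_power_decomposition[OF \<open>0 < N\<close> \<open>norm lam < 1\<close>] lam_N
      attractor_of_real[OF assms(3,4)]
    by (simp add: R_def)
  show ?thesis
    unfolding attractor_lam R_def[symmetric]
  proof (intro equalityI subsetI)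
    fix z assume "z \<in> {\<Sum>i<N. w i * lam ^ i | w. \<forall>i<N. w i \<in> of_real ` {- R .. R}}"
    then obtain w where w: "\<forall>i<N. w i \<in> of_real ` {- R .. R}" "z = (\<Sum>i<N. w i * lam ^ i)"
      by blast
    define t where "t i = Re (w i) / R" for i
    have "\<forall>i<N. \<bar>t i\<bar> \<le> 1"
      using w(1) \<open>0 < R\<close> by (auto simp: t_def abs_le_iff divide_le_eq_1 field_simps)
    moreover have "z = (\<Sum>i<N. of_real (t i) * (of_real R * lam ^ i))"
      unfolding w(2) using w(1) \<open>0 < R\<close> by (intro sum.cong) (auto simp: t_def)
    ultimately show "z \<in> zonotope (\<lambda>i. of_real R * lam ^ i) N"
      unfolding zonotope_iff by (intro exI[of _ t]) blast
  next
    fix z assume "z \<in> zonotope (\<lambda>i. of_real R * lam ^ i) N"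
    then obtain t where t: "\<forall>i<N. \<bar>t i\<bar> \<le> 1" "z = (\<Sum>i<N. of_real (t i) * (of_real R * lam ^ i))"
      by (auto simp: zonotope_iff)
    have "\<forall>i<N. of_real (t i * R) \<in> of_real ` {- R .. R}"
    proof (intro allI impI imageI)
      fix i assume "i < N"
      then have "\<bar>t i\<bar> * R \<le> 1 * R" using t(1) \<open>0 < R\<close> by (intro mult_right_mono) auto
      then have "\<bar>t i * R\<bar> \<le> R" using \<open>0 < R\<close> by (simp add: abs_mult)
      then show "t i * R \<in> {- R .. R}" by (simp add: abs_le_iff)
    qed
    moreover have "z = (\<Sum>i<N. of_real (t i * R) * lam ^ i)"
      unfolding t(2) by (simp add: mult.assoc)
    ultimately show "z \<in> {\<Sum>i<N. w i * lam ^ i | w. \<forall>i<N. w i \<in> of_real ` {- R .. R}}"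
      by (intro CollectI exI[of _ "\<lambda>i. of_real (t i * R)"]) blast
  qed
qed

lemma attractor_rotation_eq_regular_zonogon:
  fixes M :: int and r :: real
  assumes "2 \<le> N" "coprime M (int N)" "0 < r" "r < 1" "1 / 2 \<le> r ^ N"
  obtains c where "regular_zonogon N c"
    "attractor (of_real r * cis (pi * of_int M / real N)) = zonotope (regular_zonogon.gen N c) N"
proof -
  define lam where "lam = of_real r * cis (pi * of_int M / real N)"
  have "0 < N" using assms(1) by simp
  define \<pi> where "\<pi> i = nat ((M * int i) mod int N)" for i
  define \<epsilon> where "\<epsilon> i = cos (pi * of_int (M * int i div int N))" for i
  define R where "R = 1 / (1 - r ^ N)"
  define c where "c p = R * r ^ inv_into {..<N} \<pi> p" for p
  have bij: "bij_betw \<pi> {..<N} {..<N}"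
    unfolding \<pi>_def using \<open>0 < N\<close> assms(2) by (rule bij_betw_mult_mod)
  have \<epsilon>: "\<bar>\<epsilon> i\<bar> = 1" for i
    by (simp add: \<epsilon>_def)
  have lam_pow: "lam ^ i = of_real (\<epsilon> i) * (of_real (r ^ i) * cis (pi * real (\<pi> i) / real N))" for i
    unfolding lam_def \<epsilon>_def \<pi>_def by (rule power_rcis_pi_int_frac[OF \<open>0 < N\<close>])
  have lam_N: "lam ^ N = of_real (\<epsilon> N * r ^ N)"
    using \<open>0 < N\<close> by (simp add: lam_pow \<pi>_def)
  have abs_\<mu>: "\<bar>\<epsilon> N * r ^ N\<bar> = r ^ N"
    using \<epsilon> assms(3) by (simp add: abs_mult)
  have "r ^ N < 1" using assms(3,4) \<open>0 < N\<close> by (simp add: power_less_one_iff)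
  have zonogon: "regular_zonogon N c"
  proof
    show "2 \<le> N" by (rule assms(1))
    show "0 < c p" for p
      using assms(3) \<open>r ^ N < 1\<close> by (simp add: c_def R_def)
  qed
  interpret Z: regular_zonogon N c by (rule zonogon)
  have "attractor lam = zonotope (\<lambda>i. of_real (1 / (1 - \<bar>\<epsilon> N * r ^ N\<bar>)) * lam ^ i) N"
    using assms(5) \<open>r ^ N < 1\<close>
    by (intro attractor_eq_zonotope[OF \<open>0 < N\<close> lam_N]) (simp_all only: abs_\<mu>)
  also have "\<dots> = zonotope (\<lambda>i. of_real (\<epsilon> i) * (Z.gen \<circ> \<pi>) i) N"
  proof (rule zonotope_cong)
    fix i assume "i < N"
    then have "inv_into {..<N} \<pi> (\<pi> i) = i"
      using bij by (simp add: bij_betw_def inv_into_f_f)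
    then show "of_real (1 / (1 - \<bar>\<epsilon> N * r ^ N\<bar>)) * lam ^ i = of_real (\<epsilon> i) * (Z.gen \<circ> \<pi>) i"
      by (simp add: abs_\<mu> lam_pow Z.gen_def c_def R_def ac_simps)
  qed
  also have "\<dots> = zonotope (Z.gen \<circ> \<pi>) N"
    using \<epsilon> by (intro zonotope_flip_signs) simp
  also have "\<dots> = zonotope Z.gen N"
    using bij by (rule zonotope_reindex)
  finally show ?thesis using that zonogon by (simp add: lam_def)
qed

lemma attractor_rotation_polygon:
  fixes M :: int and r :: real
  assumes "2 \<le> N" "coprime M (int N)" "2 powr (- 1 / real N) \<le> r" "r < 1"
  defines "lam \<equiv> of_real r * cis (pi * of_int M / real N)"
  shows "polygon_all_angles (attractor lam) (2 * N) (pi * (real N - 1) / real N)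
    \<and> interior (attractor lam) \<noteq> {}"
proof -
  have "0 < N" using assms(1) by simp
  then have "0 < r" "1 / 2 \<le> r ^ N"
    using half_le_power_if_root_le assms(3) by auto
  then obtain c where "regular_zonogon N c" "attractor lam = zonotope (regular_zonogon.gen N c) N"
    using attractor_rotation_eq_regular_zonogon assms(1,2,4) unfolding lam_def by blast
  then show ?thesis
    using regular_zonogon.polygon_all_angles_zonotope regular_zonogon.interior_nonempty by simp
qed

theorem mainTheorem13:
  shows "(\<forall>(n::nat) (m::int) (r::real).
            n \<ge> 2 \<and> gcd m (int n) = 1 \<and> 2 powr (- 1 / real n) \<le> r \<and> r < 1 \<longrightarrow>
            (let lam = complex_of_real r * exp (\<i> * complex_of_real (pi * real_of_int m / real n))
             in polygon_all_angles (attractor lam) (2 * n) (pi * (real n - 1) / real n)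
                \<and> interior (attractor lam) \<noteq> {}))
       \<and> (\<forall>(n::nat) (m::int) (r::real).
            n \<ge> 1 \<and> gcd m (int (2 * n + 1)) = 1 \<and> 2 powr (- 1 / real (2 * n + 1)) \<le> r \<and> r < 1 \<longrightarrow>
            (let lam = complex_of_real r *
                     exp (\<i> * complex_of_real (2 * pi * real_of_int m / real (2 * n + 1)))
             in polygon_all_angles (attractor lam) (4 * n + 2) (2 * real n * pi / real (2 * n + 1))
                \<and> interior (attractor lam) \<noteq> {}))"
proof (intro conjI allI impI, goal_cases)
  case (1 n m r)
  then show ?case
    using attractor_rotation_polygon[of n m r] by (simp add: Let_def cis_conv_exp coprime_iff_gcd_eq_1)
next
  case (2 n m r)
  then have "coprime (2 * m) (int (2 * n + 1))"
    by (simp add: coprime_iff_gcd_eq_1[symmetric] coprime_left_2_iff_odd)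
  then have polygon: "polygon_all_angles (attractor (of_real r * cis (pi * of_int (2 * m) / real (2 * n + 1))))
      (2 * (2 * n + 1)) (pi * (real (2 * n + 1) - 1) / real (2 * n + 1))
    \<and> interior (attractor (of_real r * cis (pi * of_int (2 * m) / real (2 * n + 1)))) \<noteq> {}"
    using 2 by (intro attractor_rotation_polygon) auto
  have normalize: "pi * of_int (2 * m) / real (2 * n + 1) = 2 * pi * real_of_int m / real (2 * n + 1)"
    "pi * (real (2 * n + 1) - 1) / real (2 * n + 1) = 2 * real n * pi / real (2 * n + 1)"
    "2 * (2 * n + 1) = 4 * n + 2"
    by simp_all
  show ?case using polygon unfolding Let_def cis_conv_exp normalize .
qed

end
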